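(* Let $\langle\mathcal{D},\sigma,\varphi\rangle$ be a hybrid temporal achievement causal setting. Then $$\mathcal{D}\models\mathit{CausesDir}^{\mathit{prim}}_{\mathit{temp}}(a,ts,\varphi,\sigma)\land\sigma\le s^*\land\big(\forall s',t'.\;\sigma\le s'\le s^*\land\mathit{start}(s')\le t'\le\mathit{end}(s',s^* )\supset\varphi[t',s']\big)\supset\mathit{CausesDir}^{\mathit{prim}}_{\mathit{temp}}(a,ts,\varphi,s^* )$$ (free variables $a,ts,s^*$ universally quantified).
   Context: Hybrid temporal situation calculus (HTSC): $S_0$ initial situation, $do(a,s)$ successor situation, $do([a_1,\dots,a_n],s)$ the nesting. $s\sqsubset s'$: $s'$ reachable from $s$ by one or more actions; $s\sqsubseteq s'$: $s\sqsubset s'\lor s=s'$. $\mathit{time}(a(\vec x,t))=t$, $\mathit{start}(do(a,s))=\mathit{time}(a)$. $\mathit{Exec}(s)\doteq\forall a,s'.(do(a,s')\sqsubseteq s\supset\mathit{Poss}(a,s')\land\mathit{start}(s')\le\mathit{time}(a))$; $s<s'$ abbreviates $s\sqsubset s'\land\mathit{Exec}(s')$; $s\le s'$ abbreviates $s<s'\lor s=s'$. $\mathit{timeStamp}(S_0)=0$, $\mathit{timeStamp}(do(a,s))=\mathit{timeStamp}(s)+1$. A hybrid basic action theory $\mathcal{D}$ contains initial-state, precondition, successor-state (discrete fluents), state evolution (temporal fluents), unique-names and foundational axioms. A temporal fluent $f$ has state evolution axiom $f(\vec x,t,s)=y\equiv[\bigvee_i(\gamma^f_i(\vec x,s)\land\delta_i(\vec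 x,y,t,s))\lor(y=f(\vec x,\mathit{start}(s),s)\land\neg\bigvee_i\gamma^f_i(\vec x,s))]$ with mutually exclusive contexts $\gamma^f_i$ (formulas over discrete fluents). An effect $\varphi$ is a situation- and time-suppressed formula, uniform in the situation, constraining the value of one primitive temporal fluent $f$; $\varphi[t,s]$ restores time $t$ and situation $s$; $\psi[s]$ restores $s$ in a situation-suppressed $\psi$. $\mathit{CausesDir}(a,ts,\psi,s)\doteq\exists s_a.\,\mathit{timeStamp}(s_a)=ts\land(S_0<do(a,s_a)\le s)\land\neg\psi[s_a]\land\forall s'.(do(a,s_a)\le s'\le s\supset\psi[s'])$. $\mathit{end}(s',s)=\mathit{start}(s')$ if $s'=s$; $=\mathit{time}(a)$ if $do(a,s')\le s$. $\mathit{AchvSitAux}(s_\varphi,\varphi,s)\doteq\varphi[\mathit{end}(s_\varphi,s),s_\varphi]\land\forall s',t.(s_\varphi<s'\le s\land\mathit{start}(s')\le t\le\mathit{end}(s',s)\supset\varphi[t,s'])$; $\mathit{AchvSit}(s_\varphi,\varphi,s)\doteq\mathit{AchvSitAux}(s_\varphi,\varphi,s)\land\neg\exists s''.(s''<s_\varphi\land\mathit{AchvSitAux}(s'',\varphi,s))$. $\mathit{CausesDir}^{\mathit{prim}}_{\mathit{temp}}(a,ts,\varphi,s)\doteq\exists s_\varphi.\,\mathit{AchvSit}(s_\varphi,\varphi,s)\land\exists i.\,\mathit{CausesDir}(a,ts,\gamma^f_i,s_\varphi)$. Hybrid temporal achievement causal setting $\langle\mathcal{D},\sigma,\varphi\rangle$: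 $\sigma=do([\alpha_1,\dots,\alpha_n],S_0)$ ground, $n\ge1$, $\mathcal{D}\models\mathit{Exec}(\sigma)\land\neg\varphi[\mathit{start}(S_0),S_0]\land\neg\varphi[\mathit{time}(\alpha_1),S_0]\land\varphi[\mathit{start}(\sigma),\sigma]$. *)

theory Defs
  imports Main "HOL.Real"
begin

text \<open>Standard model of the foundational axioms: a situation is the finite sequence
of actions performed since S0, most recent action first.
Parameters threaded through: Poss (precondition predicate), tm (the function time),
st0 (the value start(S0)).\<close>

type_synonym 'a sit = "'a list"

definition S0 :: "'a sit" where "S0 = []"

definition do :: "'a \<Rightarrow> 'a sit \<Rightarrow> 'a sit" where "do a s = a # s"

definition sqsub :: "'a sit \<Rightarrow> 'a sit \<Rightarrow> bool" where
  "sqsub s s' \<longleftrightarrow> (\<exists>as. as \<noteq> [] \<and> s' = as @ s)"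

definition sqsubeq :: "'a sit \<Rightarrow> 'a sit \<Rightarrow> bool" where
  "sqsubeq s s' \<longleftrightarrow> sqsub s s' \<or> s = s'"

definition start :: "('a \<Rightarrow> real) \<Rightarrow> real \<Rightarrow> 'a sit \<Rightarrow> real" where
  "start tm st0 s = (case s of [] \<Rightarrow> st0 | a # _ \<Rightarrow> tm a)"

definition timeStamp :: "'a sit \<Rightarrow> nat" where
  "timeStamp s = length s"

definition Exec :: "('a \<Rightarrow> 'a sit \<Rightarrow> bool) \<Rightarrow> ('a \<Rightarrow> real) \<Rightarrow> real \<Rightarrow> 'a sit \<Rightarrow> bool" where
  "Exec Poss tm st0 s \<longleftrightarrow>
     (\<forall>a s'. sqsubeq (do a s') s \<longrightarrow> Poss a s' \<and> start tm st0 s' \<le> tm a)"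

definition slt :: "('a \<Rightarrow> 'a sit \<Rightarrow> bool) \<Rightarrow> ('a \<Rightarrow> real) \<Rightarrow> real \<Rightarrow> 'a sit \<Rightarrow> 'a sit \<Rightarrow> bool" where
  "slt Poss tm st0 s s' \<longleftrightarrow> sqsub s s' \<and> Exec Poss tm st0 s'"

definition sle :: "('a \<Rightarrow> 'a sit \<Rightarrow> bool) \<Rightarrow> ('a \<Rightarrow> real) \<Rightarrow> real \<Rightarrow> 'a sit \<Rightarrow> 'a sit \<Rightarrow> bool" where
  "sle Poss tm st0 s s' \<longleftrightarrow> slt Poss tm st0 s s' \<or> s = s'"

definition send :: "('a \<Rightarrow> 'a sit \<Rightarrow> bool) \<Rightarrow> ('a \<Rightarrow> real) \<Rightarrow> real \<Rightarrow> 'a sit \<Rightarrow> 'a sit \<Rightarrow> real" where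
  "send Poss tm st0 s' s =
     (if s' = s then start tm st0 s' else tm (THE a. sle Poss tm st0 (do a s') s))"

definition CausesDir ::
  "('a \<Rightarrow> 'a sit \<Rightarrow> bool) \<Rightarrow> ('a \<Rightarrow> real) \<Rightarrow> real \<Rightarrow> 'a \<Rightarrow> nat \<Rightarrow> ('a sit \<Rightarrow> bool) \<Rightarrow> 'a sit \<Rightarrow> bool" where
  "CausesDir Poss tm st0 a ts psi s \<longleftrightarrow>
     (\<exists>sa. timeStamp sa = ts \<and> slt Poss tm st0 S0 (do a sa) \<and> sle Poss tm st0 (do a sa) s
        \<and> \<not> psi sa
        \<and> (\<forall>s'. sle Poss tm st0 (do a sa) s' \<and> sle Poss tm st0 s' s \<longrightarrow> psi s'))"

definition AchvSitAux ::
  "('a \<Rightarrow> 'a sit \<Rightarrow> bool) \<Rightarrow> ('a \<Rightarrow> real) \<Rightarrow> real \<Rightarrow> 'a sit \<Rightarrow> (real \<Rightarrow> 'a sit \<Rightarrow> bool) \<Rightarrow> 'a sit \<Rightarrow> bool" where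
  "AchvSitAux Poss tm st0 sphi phi s \<longleftrightarrow>
     phi (send Poss tm st0 sphi s) sphi
     \<and> (\<forall>s' t. slt Poss tm st0 sphi s' \<and> sle Poss tm st0 s' s
          \<and> start tm st0 s' \<le> t \<and> t \<le> send Poss tm st0 s' s \<longrightarrow> phi t s')"

definition AchvSit ::
  "('a \<Rightarrow> 'a sit \<Rightarrow> bool) \<Rightarrow> ('a \<Rightarrow> real) \<Rightarrow> real \<Rightarrow> 'a sit \<Rightarrow> (real \<Rightarrow> 'a sit \<Rightarrow> bool) \<Rightarrow> 'a sit \<Rightarrow> bool" where
  "AchvSit Poss tm st0 sphi phi s \<longleftrightarrow>
     AchvSitAux Poss tm st0 sphi phi s
     \<and> \<not> (\<exists>s''. slt Poss tm st0 s'' sphi \<and> AchvSitAux Poss tm st0 s'' phi s)"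

text \<open>CausesDir^prim_temp(a,ts,phi,s); gam i is the i-th context gamma^f_i (instantiated
at the arguments of the fluent constrained by phi), as a situation predicate.\<close>
definition CausesDirPrimTemp ::
  "('a \<Rightarrow> 'a sit \<Rightarrow> bool) \<Rightarrow> ('a \<Rightarrow> real) \<Rightarrow> real \<Rightarrow> ('i \<Rightarrow> 'a sit \<Rightarrow> bool)
   \<Rightarrow> 'a \<Rightarrow> nat \<Rightarrow> (real \<Rightarrow> 'a sit \<Rightarrow> bool) \<Rightarrow> 'a sit \<Rightarrow> bool" where
  "CausesDirPrimTemp Poss tm st0 gam a ts phi s \<longleftrightarrow>
     (\<exists>sphi. AchvSit Poss tm st0 sphi phi s \<and> (\<exists>i. CausesDir Poss tm st0 a ts (gam i) sphi))"

end

theory Submission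
  imports Defs "HOL-Library.Sublist"
begin

text \<open>The achievement situation \<open>s\<^sub>\<phi>\<close> for \<open>\<sigma>\<close> is also the one for \<open>s\<^sup>*\<close>,
and \<open>CausesDir(a,ts,\<gamma>\<^sub>i,s\<^sub>\<phi>)\<close> does not mention the scenario at all.  Since
\<open>\<phi>\<close> persists from \<open>\<sigma>\<close> to \<open>s\<^sup>*\<close>, a situation \<open>x\<close> not strictly after \<open>\<sigma>\<close>
satisfies \<open>AchvSitAux(x,\<phi>,s\<^sup>*)\<close> iff it satisfies \<open>AchvSitAux(x,\<phi>,\<sigma>)\<close>: the two
conditions agree up to \<open>\<sigma>\<close>, and the part after \<open>\<sigma>\<close> is covered by persistence.
Neither \<open>s\<^sub>\<phi>\<close> nor any situation before it lies strictly after \<open>\<sigma>\<close>, because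
\<open>\<phi>[start(\<sigma>),\<sigma>]\<close> makes \<open>\<sigma>\<close> itself a candidate, so minimality of \<open>s\<^sub>\<phi>\<close> would
fail.  Hence both conjuncts of \<open>AchvSit(s\<^sub>\<phi>,\<phi>,\<cdot>)\<close> carry over from \<open>\<sigma>\<close> to
\<open>s\<^sup>*\<close>.\<close>

lemma sqsubeq_iff_suffix: "sqsubeq s s' \<longleftrightarrow> suffix s s'"
  by (auto simp: sqsubeq_def sqsub_def suffix_def)

lemma sqsub_iff_strict_suffix: "sqsub s s' \<longleftrightarrow> strict_suffix s s'"
  by (auto simp: sqsub_def strict_suffix_def suffix_def)

lemma Exec_suffix: "Exec P tm st0 s \<Longrightarrow> suffix s' s \<Longrightarrow> Exec P tm st0 s'"
  unfolding Exec_def sqsubeq_iff_suffix by (meson suffix_order.trans)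

lemma slt_iff: "slt P tm st0 s s' \<longleftrightarrow> strict_suffix s s' \<and> Exec P tm st0 s'"
  by (simp add: slt_def sqsub_iff_strict_suffix)

lemma sle_iff: "sle P tm st0 s s' \<longleftrightarrow> s = s' \<or> strict_suffix s s' \<and> Exec P tm st0 s'"
  by (auto simp: sle_def slt_iff)

lemma sle_imp_suffix: "sle P tm st0 s s' \<Longrightarrow> suffix s s'"
  by (auto simp: sle_iff strict_suffix_def)

lemma suffix_imp_sle: "suffix s s' \<Longrightarrow> Exec P tm st0 s' \<Longrightarrow> sle P tm st0 s s'"
  by (auto simp: sle_iff strict_suffix_def)

lemma CausesDir_imp_Exec: "CausesDir P tm st0 a ts psi s \<Longrightarrow> Exec P tm st0 s"
  by (auto simp: CausesDir_def sle_def slt_def)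

lemma suffix_Cons_unique: "suffix (a # s) s' \<Longrightarrow> suffix (b # s) s' \<Longrightarrow> a = b"
  by (auto simp: suffix_def)

lemma send_append:
  assumes exec: "Exec P tm st0 (as @ s)" and "as \<noteq> []"
  shows "send P tm st0 s (as @ s) = tm (last as)"
proof -
  have last_step: "suffix (last as # s) (as @ s)"
    using \<open>as \<noteq> []\<close> by (metis append_butlast_last_id append.assoc append_Cons append_Nil suffix_def)
  have "(THE a. sle P tm st0 (do a s) (as @ s)) = last as"
  proof (rule the_equality)
    show "sle P tm st0 (do (last as) s) (as @ s)"
      using last_step exec by (simp add: do_def suffix_imp_sle)
  next
    fix a
    assume "sle P tm st0 (do a s) (as @ s)"
    then show "a = last as"
      using last_step by (auto simp: do_def dest: sle_imp_suffix suffix_Cons_unique)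
  qed
  then show ?thesis
    using \<open>as \<noteq> []\<close> by (simp add: send_def)
qed

text \<open>Outside \<open>s \<sqsubseteq> s'\<close> the description in \<^const>\<open>send\<close> has no solution, so
\<open>end(s,s')\<close> is a junk value.  This case cannot be ignored: \<open>AchvSit(s\<^sub>\<phi>,\<phi>,s')\<close>
does not require \<open>s\<^sub>\<phi> \<sqsubseteq> s'\<close>.\<close>

lemma send_not_suffix:
  assumes "\<not> suffix s s'"
  shows "send P tm st0 s s' = tm (THE a. False)"
proof -
  have "\<not> sle P tm st0 (do a s) s'" for a
    using assms by (auto simp: do_def dest: sle_imp_suffix suffix_ConsD)
  moreover have "s \<noteq> s'"
    using assms by auto
  ultimately show ?thesis
    by (simp add: send_def)
qed

lemma send_extend:
  assumes "strict_suffix s s'" "suffix s' s''" "Exec P tm st0 s''"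
  shows "send P tm st0 s s'' = send P tm st0 s s'"
proof -
  obtain as where as: "s' = as @ s" "as \<noteq> []"
    using assms(1) by (auto simp: strict_suffix_def suffix_def)
  obtain bs where bs: "s'' = bs @ s'"
    using assms(2) by (auto simp: suffix_def)
  have "Exec P tm st0 s'"
    using assms Exec_suffix by blast
  then show ?thesis
    using as bs assms(3) send_append[of P tm st0 "bs @ as" s] send_append[of P tm st0 as s] by simp
qed

lemma start_le_send:
  assumes "suffix s s'" "Exec P tm st0 s'"
  shows "start tm st0 s \<le> send P tm st0 s s'"
proof (cases "s = s'")
  case True
  then show ?thesis by (simp add: send_def)
next
  case False
  then obtain as where as: "s' = as @ s" "as \<noteq> []"
    using assms(1) by (auto simp: suffix_def)
  then have "sqsubeq (do (last as) s) s'"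
    by (metis append_butlast_last_id append.assoc append_Cons append_Nil do_def
        sqsubeq_iff_suffix suffix_def)
  then have "start tm st0 s \<le> tm (last as)"
    using assms(2) by (auto simp: Exec_def)
  then show ?thesis
    using as assms(2) by (simp add: send_append)
qed

definition Persists ::
  "('a \<Rightarrow> 'a sit \<Rightarrow> bool) \<Rightarrow> ('a \<Rightarrow> real) \<Rightarrow> real \<Rightarrow> (real \<Rightarrow> 'a sit \<Rightarrow> bool) \<Rightarrow> 'a sit \<Rightarrow> 'a sit \<Rightarrow> bool" where
  "Persists P tm st0 phi s s'' \<longleftrightarrow>
     (\<forall>s' t. sle P tm st0 s s' \<and> sle P tm st0 s' s''
        \<and> start tm st0 s' \<le> t \<and> t \<le> send P tm st0 s' s'' \<longrightarrow> phi t s')"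

lemma AchvSitAux_not_suffix:
  assumes "\<not> suffix x s"
  shows "AchvSitAux P tm st0 x phi s \<longleftrightarrow> phi (tm (THE a. False)) x"
proof -
  have "\<not> (slt P tm st0 x s' \<and> sle P tm st0 s' s)" for s'
    using assms by (auto simp: slt_iff strict_suffix_def dest: sle_imp_suffix suffix_order.trans)
  then show ?thesis
    using assms by (auto simp: AchvSitAux_def send_not_suffix)
qed

lemma AchvSitAux_self: "AchvSitAux P tm st0 s phi s \<longleftrightarrow> phi (start tm st0 s) s"
  by (auto simp: AchvSitAux_def send_def slt_iff sle_iff suffix_order.less_asym)

lemma AchvSitAux_extend:
  assumes "suffix x s" "suffix s s''" "Exec P tm st0 s''"
    and aux: "AchvSitAux P tm st0 x phi s" and persists: "Persists P tm st0 phi s s''"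
  shows "AchvSitAux P tm st0 x phi s''"
  unfolding AchvSitAux_def
proof (intro conjI allI impI)
  have "sle P tm st0 s s" "sle P tm st0 s s''"
    using assms(2,3) by (simp_all add: sle_iff strict_suffix_def)
  then have "phi (send P tm st0 s s'') s"
    using persists start_le_send[OF assms(2,3)] unfolding Persists_def by blast
  moreover have "phi (send P tm st0 x s'') x" if "x \<noteq> s"
    using aux send_extend[of x s s''] that assms(1-3) by (simp add: AchvSitAux_def strict_suffix_def)
  ultimately show "phi (send P tm st0 x s'') x"
    by blast
next
  fix s' t
  assume s': "slt P tm st0 x s' \<and> sle P tm st0 s' s''
    \<and> start tm st0 s' \<le> t \<and> t \<le> send P tm st0 s' s''"
  then have "suffix s' s''"
    by (blast dest: sle_imp_suffix)
  then consider "strict_suffix s' s" | "suffix s s'"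
    using suffix_same_cases assms(2) by (auto simp: strict_suffix_def)
  then show "phi t s'"
  proof cases
    case 1
    have "sle P tm st0 s' s"
      using 1 Exec_suffix[OF assms(3,2)] by (simp add: sle_iff)
    moreover have "send P tm st0 s' s'' = send P tm st0 s' s"
      using send_extend[OF 1 assms(2,3)] .
    ultimately show ?thesis
      using s' aux by (auto simp: AchvSitAux_def)
  next
    case 2
    then have "sle P tm st0 s s'"
      using \<open>suffix s' s''\<close> assms(3) Exec_suffix suffix_imp_sle by blast
    then show ?thesis
      using s' persists by (auto simp: Persists_def)
  qed
qed

lemma AchvSitAux_restrict:
  assumes "strict_suffix x s" "suffix s s''" "Exec P tm st0 s''"
    and aux: "AchvSitAux P tm st0 x phi s''" and achieved: "phi (start tm st0 s) s"
  shows "AchvSitAux P tm st0 x phi s"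
  unfolding AchvSitAux_def
proof (intro conjI allI impI)
  show "phi (send P tm st0 x s) x"
    using aux send_extend[OF assms(1-3)] by (simp add: AchvSitAux_def)
next
  fix s' t
  assume s': "slt P tm st0 x s' \<and> sle P tm st0 s' s
    \<and> start tm st0 s' \<le> t \<and> t \<le> send P tm st0 s' s"
  show "phi t s'"
  proof (cases "s' = s")
    case True
    then have "t = start tm st0 s"
      using s' by (simp add: send_def)
    then show ?thesis
      using True achieved by simp
  next
    case False
    then have "strict_suffix s' s"
      using s' by (auto simp: strict_suffix_def dest: sle_imp_suffix)
    then have "sle P tm st0 s' s''" "send P tm st0 s' s = send P tm st0 s' s''"
      using assms(2,3) suffix_order.trans[of s' s s''] suffix_order.less_imp_le[of s' s]
      by (simp_all add: send_extend suffix_imp_sle)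
    then show ?thesis
      using s' aux by (auto simp: AchvSitAux_def)
  qed
qed

lemma AchvSitAux_persistent_extension_iff:
  assumes "sle P tm st0 s s''" and achieved: "phi (start tm st0 s) s"
    and persists: "Persists P tm st0 phi s s''" and "\<not> strict_suffix s x"
  shows "AchvSitAux P tm st0 x phi s'' \<longleftrightarrow> AchvSitAux P tm st0 x phi s"
proof (cases "s = s''")
  case True
  then show ?thesis by simp
next
  case False
  then have s: "suffix s s''" "Exec P tm st0 s''"
    using assms(1) by (auto simp: sle_iff strict_suffix_def)
  show ?thesis
  proof (cases "suffix x s''")
    case False
    then have "\<not> suffix x s"
      using s(1) suffix_order.trans by blast
    then show ?thesis
      using False by (simp add: AchvSitAux_not_suffix)
  next
    case True
    then have "suffix x s"
      using suffix_same_cases[OF True s(1)] assms(4) by (auto simp: strict_suffix_def)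
    then consider "x = s" | "strict_suffix x s"
      by (auto simp: strict_suffix_def)
    then show ?thesis
    proof cases
      case 1
      then show ?thesis
        using AchvSitAux_extend[OF _ s] persists achieved by (simp add: AchvSitAux_self)
    next
      case 2
      then show ?thesis
        using AchvSitAux_extend[OF _ s] AchvSitAux_restrict[OF _ s] persists achieved
        by (auto simp: strict_suffix_def)
    qed
  qed
qed

lemma AchvSit_persistent_extension:
  assumes le: "sle P tm st0 s s''" and achieved: "phi (start tm st0 s) s"
    and persists: "Persists P tm st0 phi s s''"
    and achv: "AchvSit P tm st0 sphi phi s" and exec: "Exec P tm st0 sphi"
  shows "AchvSit P tm st0 sphi phi s''"
proof -
  note aux_iff = AchvSitAux_persistent_extension_iff[OF le achieved persists]
  have minimal: "\<not> AchvSitAux P tm st0 x phi s" if "slt P tm st0 x sphi" for x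
    using achv that by (auto simp: AchvSit_def)
  have not_after: "\<not> strict_suffix s sphi"
    using minimal[of s] exec achieved by (auto simp: slt_iff AchvSitAux_self)
  have "AchvSitAux P tm st0 sphi phi s''"
    using achv aux_iff[OF not_after] by (simp add: AchvSit_def)
  moreover have "\<not> AchvSitAux P tm st0 x phi s''" if "slt P tm st0 x sphi" for x
  proof -
    have "\<not> strict_suffix s x"
      using that not_after by (auto simp: slt_iff dest: suffix_order.less_trans)
    then show ?thesis
      using aux_iff minimal[OF that] by blast
  qed
  ultimately show ?thesis
    by (auto simp: AchvSit_def)
qed

theorem theorem5p6:
  fixes Poss :: "'a \<Rightarrow> 'a list \<Rightarrow> bool"
    and tm :: "'a \<Rightarrow> real"
    and st0 :: real
    and f :: "'x \<Rightarrow> real \<Rightarrow> 'a list \<Rightarrow> 'v"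
    and gamma :: "'i::finite \<Rightarrow> 'x \<Rightarrow> 'a list \<Rightarrow> bool"
    and delta :: "'i \<Rightarrow> 'x \<Rightarrow> 'v \<Rightarrow> real \<Rightarrow> 'a list \<Rightarrow> bool"
    and c :: 'x
    and Phi :: "'v \<Rightarrow> bool"
    and sigma :: "'a list"
    and a :: 'a and ts :: nat and sstar :: "'a list"
  assumes excl: "\<forall>i j x s. gamma i x s \<and> gamma j x s \<longrightarrow> i = j"
    and sea: "\<forall>x y t s. (f x t s = y) \<longleftrightarrow>
               ((\<exists>i. gamma i x s \<and> delta i x y t s)
                \<or> (y = f x (start tm st0 s) s \<and> \<not> (\<exists>i. gamma i x s)))"
    and ground: "sigma \<noteq> []"
    and exec: "Exec Poss tm st0 sigma"
    and notS0: "\<not> Phi (f c (start tm st0 S0) S0)"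
    and notS0a1: "\<not> Phi (f c (tm (last sigma)) S0)"
    and achieved: "Phi (f c (start tm st0 sigma) sigma)"
  shows "CausesDirPrimTemp Poss tm st0 (\<lambda>i s. gamma i c s) a ts (\<lambda>t s. Phi (f c t s)) sigma
         \<and> sle Poss tm st0 sigma sstar
         \<and> (\<forall>s' t'. sle Poss tm st0 sigma s' \<and> sle Poss tm st0 s' sstar
                  \<and> start tm st0 s' \<le> t' \<and> t' \<le> send Poss tm st0 s' sstar
                  \<longrightarrow> Phi (f c t' s'))
         \<longrightarrow> CausesDirPrimTemp Poss tm st0 (\<lambda>i s. gamma i c s) a ts (\<lambda>t s. Phi (f c t s)) sstar"
proof (intro impI, elim conjE)
  assume caused: "CausesDirPrimTemp Poss tm st0 (\<lambda>i s. gamma i c s) a ts (\<lambda>t s. Phi (f c t s)) sigma"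
    and le: "sle Poss tm st0 sigma sstar"
    and persists: "\<forall>s' t'. sle Poss tm st0 sigma s' \<and> sle Poss tm st0 s' sstar
                  \<and> start tm st0 s' \<le> t' \<and> t' \<le> send Poss tm st0 s' sstar
                  \<longrightarrow> Phi (f c t' s')"
  from caused obtain sphi i
    where achv: "AchvSit Poss tm st0 sphi (\<lambda>t s. Phi (f c t s)) sigma"
      and causes: "CausesDir Poss tm st0 a ts (\<lambda>s. gamma i c s) sphi"
    by (auto simp: CausesDirPrimTemp_def)
  have "AchvSit Poss tm st0 sphi (\<lambda>t s. Phi (f c t s)) sstar"
    using AchvSit_persistent_extension[OF le _ _ achv CausesDir_imp_Exec[OF causes]]
      achieved persists by (simp add: Persists_def)
  with causes show "CausesDirPrimTemp Poss tm st0 (\<lambda>i s. gamma i c s) a ts (\<lambda>t s. Phi (f c t s)) sstar"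
    by (auto simp: CausesDirPrimTemp_def)
qed

end
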